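(* Let $n,N\ge 1$, let $A_0,\dots,A_N\in\mathbb{C}^{n\times n}$, $u_0\in\mathbb{C}^n$, and let $c_0(t),c_1(t),\dots$ be the Taylor coefficients in $\varepsilon$ of $u(t,\varepsilon)=\exp(tA(\varepsilon))u_0$. Then for every integer $m\ge 1$ and every $t\in\mathbb{R}$, $$\mathrm{vec}(c_0(t),\dots,c_{m-1}(t))=\exp(tL_m)\,\widetilde u_0,\qquad \widetilde u_0:=\begin{bmatrix}u_0\\0\\\vdots\\0\end{bmatrix}\in\mathbb{C}^{mn}.$$ Equivalently, the vector $\mathrm{vec}(c_0(t),\dots,c_{m-1}(t))$ solves the linear ODE $\frac{d}{dt}v=L_mv$, $v(0)=\widetilde u_0$.
   Context: $A(\varepsilon):=A_0+\varepsilon A_1+\cdots+\varepsilon^NA_N$. Since $\varepsilon\mapsto\exp(tA(\varepsilon))u_0$ is entire, write $u(t,\varepsilon)=\exp(tA(\varepsilon))u_0=\sum_{\ell=0}^\infty\varepsilon^\ell c_\ell(t)$ with $c_\ell(t)\in\mathbb{C}^n$. For vectors $x_1,\dots,x_k\in\mathbb{C}^n$, $\mathrm{vec}(x_1,\dots,x_k)$ denotes the stacked vector $[x_1^T,\dots,x_k^T]^T\in\mathbb{C}^{nk}$. For $m\ge1$, $L_m\in\mathbb{C}^{mn\times mn}$ is the lower block-triangular block-Toeplitz matrix with $n\times n$ blocks whose $(r,s)$ block ($1\le r,s\le m$) equals $A_{r-s}$ if $0\le r-s\le \min(m-1,N)$ and $0$ otherwise; equivalently $L_m=\sum_{i=0}^{\min(m-1,N)}S_m^i\otimes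 A_i$ with $S_m=\sum_{\ell=1}^{m-1}e_{\ell+1}e_\ell^T\in\mathbb{R}^{m\times m}$. *)

theory Defs
  imports "HOL-Analysis.Derivative" "Jordan_Normal_Form.Matrix"
begin

definition mat_exp :: "complex mat \<Rightarrow> complex mat" where
  "mat_exp M = mat (dim_row M) (dim_col M)
     (\<lambda>(i,j). \<Sum>k. (M ^\<^sub>m k) $$ (i,j) / of_nat (fact k))"

definition Apoly :: "nat \<Rightarrow> nat \<Rightarrow> (nat \<Rightarrow> complex mat) \<Rightarrow> complex \<Rightarrow> complex mat" where
  "Apoly n N A eps = mat n n (\<lambda>(i,j). \<Sum>k\<le>N. eps ^ k * A k $$ (i,j))"

definition u_sol :: "nat \<Rightarrow> nat \<Rightarrow> (nat \<Rightarrow> complex mat) \<Rightarrow> complex vec \<Rightarrow> real \<Rightarrow> complex \<Rightarrow> complex vec" where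
  "u_sol n N A u0 t eps = mat_exp (complex_of_real t \<cdot>\<^sub>m Apoly n N A eps) *\<^sub>v u0"

definition taylor_coeff :: "(complex \<Rightarrow> complex) \<Rightarrow> nat \<Rightarrow> complex" where
  "taylor_coeff f l = (deriv ^^ l) f 0 / of_nat (fact l)"

definition c_coeff :: "nat \<Rightarrow> nat \<Rightarrow> (nat \<Rightarrow> complex mat) \<Rightarrow> complex vec \<Rightarrow> nat \<Rightarrow> real \<Rightarrow> complex vec" where
  "c_coeff n N A u0 l t = vec n (\<lambda>j. taylor_coeff (\<lambda>eps. u_sol n N A u0 t eps $ j) l)"

definition stack_vec :: "nat \<Rightarrow> nat \<Rightarrow> (nat \<Rightarrow> complex vec) \<Rightarrow> complex vec" where
  "stack_vec m n x = vec (m * n) (\<lambda>i. x (i div n) $ (i mod n))"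

definition L_mat :: "nat \<Rightarrow> nat \<Rightarrow> nat \<Rightarrow> (nat \<Rightarrow> complex mat) \<Rightarrow> complex mat" where
  "L_mat m n N A = mat (m * n) (m * n) (\<lambda>(i,j).
     (let r = i div n; s = j div n in
       if s \<le> r \<and> r - s \<le> min (m - 1) N then A (r - s) $$ (i mod n, j mod n) else 0))"

end

theory Submission
  imports Defs "HOL-Analysis.FPS_Convergence"
begin

(* Expanding mat_exp into its series, (A(eps)^k u0)_j is a polynomial in eps of degree at most kN
   whose coefficients grow at most geometrically in k, so the double series may be rearranged into a
   power series in eps: the r-th Taylor coefficient of u(t,eps)_j is the sum over k of
   [eps^r] (A(eps)^k u0)_j / k!.  On the other side, the (r,s) block A_(r-s) of L_m is a convolution
   weight, so L_m acts on stacked coefficient vectors as multiplication by A(eps) truncated at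
   degree m; hence L_m^k applied to the stacked u0 stacks the first m coefficients of A(eps)^k u0,
   and the two series agree entrywise.  The factor t is absorbed into the A_i. *)

lemma summable_power_div_fact: "summable (\<lambda>k. (x::real) ^ k / fact k)"
  using summable_exp[of x] by (simp add: divide_inverse mult.commute)

lemma sums_columns_of_finite_rows:
  fixes x :: "nat \<Rightarrow> nat \<Rightarrow> 'a::banach"
  assumes supp: "\<And>k r. d k < r \<Longrightarrow> x k r = 0"
    and summable: "summable (\<lambda>k. \<Sum>r\<le>d k. norm (x k r))"
  shows "(\<lambda>r. \<Sum>k. x k r) sums (\<Sum>k. \<Sum>r\<le>d k. x k r)"
proof -
  have rows: "((\<lambda>r. x k r) has_sum (\<Sum>r\<le>d k. x k r)) UNIV" for k
    by (rule has_sum_finite_neutralI[of "{..d k}"]) (auto simp: supp)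
  have norm_rows: "((\<lambda>r. norm (x k r)) has_sum (\<Sum>r\<le>d k. norm (x k r))) UNIV" for k
    by (rule has_sum_finite_neutralI[of "{..d k}"]) (auto simp: supp)
  have "(\<Sum>\<^sub>\<infinity>r. norm (x k r)) = (\<Sum>r\<le>d k. norm (x k r))" for k
    using norm_rows infsumI by blast
  hence "(\<lambda>k. \<Sum>\<^sub>\<infinity>r. norm (x k r)) abs_summable_on UNIV"
    using norm_summable_imp_summable_on[of "\<lambda>k. norm (\<Sum>\<^sub>\<infinity>r. norm (x k r))"] summable
    by (simp add: sum_nonneg)
  moreover have "(\<lambda>r. x k r) abs_summable_on UNIV" for k
    using norm_rows summable_on_def by blast
  ultimately have "(\<lambda>(k, r). x k r) abs_summable_on UNIV \<times> UNIV"
    unfolding abs_summable_on_Sigma_iff by simp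
  then obtain T where T: "((\<lambda>(k, r). x k r) has_sum T) (UNIV \<times> UNIV)"
    using abs_summable_summable summable_on_def by blast
  have "((\<lambda>k. \<Sum>r\<le>d k. x k r) has_sum T) UNIV"
    using has_sum_SigmaD[OF T] rows by simp
  hence T_rows: "T = (\<Sum>k. \<Sum>r\<le>d k. x k r)"
    using has_sum_imp_sums sums_unique by blast
  have T_swap: "((\<lambda>(r, k). x k r) has_sum T) (UNIV \<times> UNIV)"
    using has_sum_swap[THEN iffD1, OF T] by simp
  have "((\<lambda>k. x k r) has_sum (\<Sum>k. x k r)) UNIV" for r
  proof -
    have entry_le_row: "norm (x k r) \<le> (\<Sum>r'\<le>d k. norm (x k r'))" for k
      by (cases "r \<le> d k") (auto simp: supp sum_nonneg intro: member_le_sum)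
    have "summable (\<lambda>k. norm (x k r))"
      by (rule summable_comparison_test'[OF summable, of 0]) (simp add: entry_le_row)
    thus ?thesis
      by (rule norm_summable_imp_has_sum[OF _ summable_sums[OF summable_norm_cancel]]) fact+
  qed
  hence "((\<lambda>r. \<Sum>k. x k r) has_sum T) UNIV"
    by (intro has_sum_SigmaD[OF T_swap]) simp
  thus ?thesis unfolding T_rows by (rule has_sum_imp_sums)
qed

lemma summable_sum_norm_poly_terms_div_fact:
  fixes c :: "nat \<Rightarrow> nat \<Rightarrow> complex" and z :: complex
  assumes bound: "\<And>k r. norm (c k r) \<le> C * B ^ k" and B0: "B \<ge> 0" and C0: "C \<ge> 0"
  shows "summable (\<lambda>k. \<Sum>r\<le>k*N. norm (c k r * z ^ r / fact k))"
proof -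
  define R where "R = max 1 (norm z)"
  have R1: "R \<ge> 1" by (simp add: R_def)
  have "(\<Sum>r\<le>k*N. norm (c k r * z ^ r / fact k)) \<le> C * ((B * (2*R)^N)^k / fact k)" for k
  proof -
    have term_le: "norm (c k r * z ^ r / fact k) \<le> C * B^k * R^(k*N) / fact k" if "r \<le> k*N" for r
    proof -
      have "norm z ^ r \<le> R ^ (k*N)"
        using power_mono[of "norm z" R r] power_increasing[OF that R1] by (simp add: R_def)
      thus ?thesis
        by (simp add: norm_mult norm_divide norm_power divide_right_mono mult_mono bound B0 C0)
    qed
    have "(\<Sum>r\<le>k*N. norm (c k r * z ^ r / fact k)) \<le> (\<Sum>r\<le>k*N. C * B^k * R^(k*N) / fact k)"
      by (rule sum_mono) (simp add: term_le)
    also have "\<dots> = real (k*N+1) * (C * B^k * R^(k*N)) / fact k"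
      by simp
    also have "\<dots> \<le> 2^(k*N) * (C * B^k * R^(k*N)) / fact k"
    proof -
      have "k*N + 1 \<le> (2::nat)^(k*N)"
        using less_exp[of "k*N"] by linarith
      hence "real (k*N+1) \<le> 2^(k*N)"
        by (metis of_nat_le_iff of_nat_numeral of_nat_power)
      thus ?thesis using B0 R1 C0 by (intro divide_right_mono mult_right_mono) auto
    qed
    also have "\<dots> = C * ((B * (2*R)^N)^k / fact k)"
      by (simp add: power_mult_distrib power_mult[symmetric] mult.commute[of k N] mult_ac)
    finally show ?thesis .
  qed
  thus ?thesis
    by (intro summable_comparison_test'[OF summable_mult[OF summable_power_div_fact], of 0])
       (simp add: sum_nonneg)
qed

lemma taylor_coeff_suminf_polys:
  fixes c :: "nat \<Rightarrow> nat \<Rightarrow> complex"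
  assumes supp: "\<And>k r. k * N < r \<Longrightarrow> c k r = 0"
    and bound: "\<And>k r. norm (c k r) \<le> C * B ^ k" and B0: "B \<ge> 0" and C0: "C \<ge> 0"
  shows "taylor_coeff (\<lambda>z. \<Sum>k. (\<Sum>r\<le>k*N. c k r * z ^ r) / fact k) l = (\<Sum>k. c k l / fact k)"
proof -
  define f where "f z = (\<Sum>k. (\<Sum>r\<le>k*N. c k r * z ^ r) / fact k)" for z :: complex
  have "(\<lambda>r. \<Sum>k. c k r * z ^ r / fact k) sums f z" for z
    using sums_columns_of_finite_rows[of "\<lambda>k. k*N" "\<lambda>k r. c k r * z ^ r / fact k"]
      supp summable_sum_norm_poly_terms_div_fact[OF bound B0 C0]
    by (simp add: f_def sum_divide_distrib)
  moreover have "(\<Sum>k. c k r * z ^ r / fact k) = (\<Sum>k. c k r / fact k) * z ^ r" for r z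
  proof -
    have "summable (\<lambda>k. c k r / fact k)"
      using bound[of _ r]
      by (intro summable_comparison_test'[OF summable_mult[OF summable_power_div_fact, of C B], of 0])
         (simp add: norm_divide divide_right_mono)
    from suminf_mult[OF this, of "z ^ r"] show ?thesis by (simp add: mult_ac)
  qed
  ultimately have "f has_fps_expansion Abs_fps (\<lambda>r. \<Sum>k. c k r / fact k)"
    by (intro has_fps_expansionI) simp
  from fps_nth_fps_expansion[OF this, of l]
  show ?thesis unfolding taylor_coeff_def f_def[symmetric] by simp
qed

lemma mod_less_of_less_mult:
  fixes i m n :: nat
  shows "i < m*n \<Longrightarrow> i mod n < n"
  by (cases "n = 0") auto

lemma mult_add_less_mult:
  fixes s l m n :: nat
  assumes "s < m" "l < n"
  shows "s*n + l < m*n"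
proof -
  have "s*n + l < Suc s * n" using assms(2) by simp
  also have "\<dots> \<le> m*n" using assms by (intro mult_right_mono) auto
  finally show ?thesis .
qed

lemma sum_lessThan_mult_blocks:
  fixes m n :: nat
  shows "(\<Sum>i<m*n. f i) = (\<Sum>s<m. \<Sum>l<n. f (s*n + l))"
proof -
  have "(\<Sum>i<m*n. f i) = (\<Sum>(s,l)\<in>{..<m}\<times>{..<n}. f (s*n + l))"
    by (rule sum.reindex_bij_witness[where i="\<lambda>(s,l). s*n + l" and j="\<lambda>i. (i div n, i mod n)"])
       (auto simp: mult_add_less_mult mod_less_of_less_mult less_mult_imp_div_less)
  thus ?thesis by (simp add: sum.cartesian_product)
qed

lemma poly_eq_sum_coeff_le_degree_bound:
  fixes x :: "'a::{comm_semiring_0,semiring_1}"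
  assumes "degree p \<le> d"
  shows "poly p x = (\<Sum>i\<le>d. coeff p i * x ^ i)"
  unfolding poly_altdef using assms
  by (intro sum.mono_neutral_left) (auto simp: coeff_eq_0)

lemma pow_mat_Suc_left:
  assumes "M \<in> carrier_mat d d"
  shows "M ^\<^sub>m Suc k = M * M ^\<^sub>m k"
proof (induction k)
  case (Suc k)
  have "M ^\<^sub>m Suc (Suc k) = (M * M ^\<^sub>m k) * M" using Suc by simp
  also have "\<dots> = M * (M ^\<^sub>m k * M)" using assms by (intro assoc_mult_mat) auto
  finally show ?case by simp
qed (use assms in simp)

lemma pow_mat_Suc_mult_vec:
  assumes "M \<in> carrier_mat d d" "v \<in> carrier_vec d"
  shows "M ^\<^sub>m Suc k *\<^sub>v v = M *\<^sub>v (M ^\<^sub>m k *\<^sub>v v)"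
  unfolding pow_mat_Suc_left[OF assms(1)] using assms by (intro assoc_mult_mat_vec) auto

lemma norm_pow_mat_index_le:
  fixes M :: "'a::{real_normed_field} mat"
  assumes M: "M \<in> carrier_mat d d" and "a < d" "b < d"
  shows "norm ((M ^\<^sub>m k) $$ (a,b)) \<le> (d * (\<Sum>a<d. \<Sum>b<d. norm (M $$ (a,b)))) ^ k"
  using assms(2,3)
proof (induction k arbitrary: a b)
  case (Suc k)
  define \<alpha> where "\<alpha> = (\<Sum>a<d. \<Sum>b<d. norm (M $$ (a,b)))"
  have \<alpha>0: "\<alpha> \<ge> 0" unfolding \<alpha>_def by (auto intro!: sum_nonneg)
  have entry_le: "norm (M $$ (c,b)) \<le> \<alpha>" if "c < d" "b < d" for c b
  proof -
    have "norm (M $$ (c,b)) \<le> (\<Sum>b<d. norm (M $$ (c,b)))"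
      using that by (intro member_le_sum[where f="\<lambda>b. norm (M $$ (c,b))"]) auto
    also have "\<dots> \<le> \<alpha>" unfolding \<alpha>_def
      using that by (intro member_le_sum[where f="\<lambda>c. \<Sum>b<d. norm (M $$ (c,b))"]) (auto intro!: sum_nonneg)
    finally show ?thesis .
  qed
  have "(M ^\<^sub>m Suc k) $$ (a,b) = (\<Sum>c\<in>{0..<d}. (M ^\<^sub>m k) $$ (a,c) * M $$ (c,b))"
    using Suc.prems M by (simp add: scalar_prod_def)
  also have "norm \<dots> \<le> (\<Sum>c\<in>{0..<d}. (d*\<alpha>)^k * \<alpha>)"
    by (rule order.trans[OF norm_sum sum_mono])
       (use Suc entry_le \<alpha>0 in \<open>auto simp: norm_mult \<alpha>_def intro!: mult_mono\<close>)
  also have "\<dots> = (d*\<alpha>)^Suc k" by (simp add: mult_ac)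
  finally show ?case unfolding \<alpha>_def .
qed (use M in auto)

lemma index_mat_exp_mult_vec:
  fixes M :: "complex mat"
  assumes M: "M \<in> carrier_mat d d" and v: "v \<in> carrier_vec d" and i: "i < d"
  shows "(mat_exp M *\<^sub>v v) $ i = (\<Sum>k. (M ^\<^sub>m k *\<^sub>v v) $ i / fact k)"
proof -
  have summable: "summable (\<lambda>k. (M ^\<^sub>m k) $$ (i,c) / fact k)" if "c < d" for c
    using norm_pow_mat_index_le[OF M i that]
    by (intro summable_comparison_test'[OF summable_power_div_fact, of 0 _
          "d * (\<Sum>a<d. \<Sum>b<d. norm (M $$ (a,b)))"])
       (simp add: norm_divide divide_right_mono)
  have "(mat_exp M *\<^sub>v v) $ i = (\<Sum>c\<in>{0..<d}. (\<Sum>k. (M ^\<^sub>m k) $$ (i,c) / fact k) * v $ c)"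
    using M v i by (simp add: mat_exp_def scalar_prod_def)
  also have "\<dots> = (\<Sum>c\<in>{0..<d}. \<Sum>k. (M ^\<^sub>m k) $$ (i,c) / fact k * v $ c)"
    using summable by (intro sum.cong refl suminf_mult2) auto
  also have "\<dots> = (\<Sum>k. \<Sum>c\<in>{0..<d}. (M ^\<^sub>m k) $$ (i,c) / fact k * v $ c)"
    using summable by (intro suminf_sum[symmetric] summable_mult2) auto
  also have "\<dots> = (\<Sum>k. (M ^\<^sub>m k *\<^sub>v v) $ i / fact k)"
    using M v i by (simp add: scalar_prod_def sum_divide_distrib mult_ac)
  finally show ?thesis .
qed

definition Apoly_entry_poly :: "nat \<Rightarrow> (nat \<Rightarrow> complex mat) \<Rightarrow> nat \<Rightarrow> nat \<Rightarrow> complex poly" where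
  "Apoly_entry_poly N A j l = (\<Sum>i\<le>N. monom (A i $$ (j,l)) i)"

lemma coeff_Apoly_entry_poly:
  "coeff (Apoly_entry_poly N A j l) i = (if i \<le> N then A i $$ (j,l) else 0)"
  unfolding Apoly_entry_poly_def by (simp add: coeff_sum)

lemma poly_Apoly_entry_poly:
  "j < n \<Longrightarrow> l < n \<Longrightarrow> poly (Apoly_entry_poly N A j l) eps = Apoly n N A eps $$ (j,l)"
  unfolding Apoly_entry_poly_def Apoly_def by (simp add: poly_sum poly_monom mult.commute)

lemma degree_Apoly_entry_poly: "degree (Apoly_entry_poly N A j l) \<le> N"
  unfolding Apoly_entry_poly_def
  by (intro degree_sum_le) (auto intro: order.trans[OF degree_monom_le])

lemma sum_norm_coeff_Apoly_entry_poly_le: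
  "(\<Sum>i\<le>r. norm (coeff (Apoly_entry_poly N A j l) i)) \<le> (\<Sum>i\<le>N. norm (A i $$ (j,l)))"
proof -
  have "(\<Sum>i\<le>r. norm (coeff (Apoly_entry_poly N A j l) i)) = (\<Sum>i\<in>{..r} \<inter> {..N}. norm (A i $$ (j,l)))"
    by (rule sum.mono_neutral_cong_right) (auto simp: coeff_Apoly_entry_poly)
  also have "\<dots> \<le> (\<Sum>i\<le>N. norm (A i $$ (j,l)))"
    by (rule sum_mono2) auto
  finally show ?thesis .
qed

fun pow_Apoly_vec_poly ::
  "nat \<Rightarrow> nat \<Rightarrow> (nat \<Rightarrow> complex mat) \<Rightarrow> complex vec \<Rightarrow> nat \<Rightarrow> nat \<Rightarrow> complex poly" where
  "pow_Apoly_vec_poly n N A u0 0 j = [:u0 $ j:]"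
| "pow_Apoly_vec_poly n N A u0 (Suc k) j =
     (\<Sum>l<n. pow_Apoly_vec_poly n N A u0 k l * Apoly_entry_poly N A j l)"

lemma poly_pow_Apoly_vec_poly:
  assumes "u0 \<in> carrier_vec n" "j < n"
  shows "(Apoly n N A eps ^\<^sub>m k *\<^sub>v u0) $ j = poly (pow_Apoly_vec_poly n N A u0 k j) eps"
  using assms(2)
proof (induction k arbitrary: j)
  case 0
  thus ?case using assms by (simp add: Apoly_def)
next
  case (Suc k)
  let ?M = "Apoly n N A eps"
  have "(?M ^\<^sub>m Suc k *\<^sub>v u0) $ j = (\<Sum>l\<in>{0..<n}. ?M $$ (j,l) * (?M ^\<^sub>m k *\<^sub>v u0) $ l)"
    using pow_mat_Suc_mult_vec[of ?M n u0] assms(1) Suc.prems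
    by (simp add: Apoly_def scalar_prod_def)
  also have "\<dots> = poly (pow_Apoly_vec_poly n N A u0 (Suc k) j) eps"
    using Suc by (auto simp: poly_sum poly_Apoly_entry_poly atLeast0LessThan mult.commute
      intro: sum.cong)
  finally show ?case .
qed

lemma degree_pow_Apoly_vec_poly: "degree (pow_Apoly_vec_poly n N A u0 k j) \<le> k * N"
proof (induction k arbitrary: j)
  case (Suc k)
  have "degree (pow_Apoly_vec_poly n N A u0 k l * Apoly_entry_poly N A j l) \<le> k * N + N" for l
    using degree_mult_le[of "pow_Apoly_vec_poly n N A u0 k l"] Suc degree_Apoly_entry_poly[of N A j l]
    by (meson add_mono order.trans)
  thus ?case by (simp add: degree_sum_le add.commute)
qed simp

lemma norm_coeff_pow_Apoly_vec_poly_le: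
  assumes "j < n"
  shows "norm (coeff (pow_Apoly_vec_poly n N A u0 k j) r)
           \<le> (\<Sum>j<n. norm (u0 $ j)) * (\<Sum>j<n. \<Sum>l<n. \<Sum>i\<le>N. norm (A i $$ (j,l))) ^ k"
  using assms
proof (induction k arbitrary: j r)
  case 0
  thus ?case
    by (cases r) (auto intro!: member_le_sum[where f="\<lambda>j. norm (u0 $ j)"] sum_nonneg)
next
  case (Suc k)
  define \<mu> where "\<mu> = (\<Sum>j<n. norm (u0 $ j))"
  define \<beta> where "\<beta> = (\<Sum>j<n. \<Sum>l<n. \<Sum>i\<le>N. norm (A i $$ (j,l)))"
  have \<mu>\<beta>0: "0 \<le> \<mu> * \<beta> ^ k" unfolding \<mu>_def \<beta>_def by (simp add: sum_nonneg)
  have coeff_product_le: "norm (coeff (pow_Apoly_vec_poly n N A u0 k l * Apoly_entry_poly N A j l) r)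
      \<le> \<mu> * \<beta> ^ k * (\<Sum>i\<le>N. norm (A i $$ (j,l)))" if "l < n" for l
  proof -
    have "norm (coeff (pow_Apoly_vec_poly n N A u0 k l * Apoly_entry_poly N A j l) r)
        = norm (\<Sum>i\<le>r. coeff (Apoly_entry_poly N A j l) i * coeff (pow_Apoly_vec_poly n N A u0 k l) (r - i))"
      by (simp add: coeff_mult mult.commute[of "pow_Apoly_vec_poly n N A u0 k l"])
    also have "\<dots> \<le> (\<Sum>i\<le>r. norm (coeff (Apoly_entry_poly N A j l) i) * (\<mu> * \<beta> ^ k))"
      using Suc.IH[OF that] unfolding \<mu>_def \<beta>_def
      by (intro order.trans[OF norm_sum sum_mono]) (simp add: norm_mult mult_left_mono)
    also have "\<dots> \<le> \<mu> * \<beta> ^ k * (\<Sum>i\<le>N. norm (A i $$ (j,l)))"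
      using mult_left_mono[OF sum_norm_coeff_Apoly_entry_poly_le \<mu>\<beta>0]
      by (simp add: sum_distrib_left mult.commute)
    finally show ?thesis .
  qed
  have "norm (coeff (pow_Apoly_vec_poly n N A u0 (Suc k) j) r)
      \<le> (\<Sum>l<n. \<mu> * \<beta> ^ k * (\<Sum>i\<le>N. norm (A i $$ (j,l))))"
    by (auto simp: coeff_sum intro!: order.trans[OF norm_sum sum_mono] coeff_product_le)
  also have "\<dots> \<le> \<mu> * \<beta> ^ k * \<beta>"
  proof -
    have "(\<Sum>l<n. \<Sum>i\<le>N. norm (A i $$ (j,l))) \<le> \<beta>"
      unfolding \<beta>_def using Suc.prems
      by (intro member_le_sum[where f="\<lambda>j. \<Sum>l<n. \<Sum>i\<le>N. norm (A i $$ (j,l))"])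
         (auto intro!: sum_nonneg)
    thus ?thesis by (simp add: sum_distrib_left[symmetric] mult_left_mono[OF _ \<mu>\<beta>0])
  qed
  finally show ?case unfolding \<mu>_def \<beta>_def by (simp add: mult_ac)
qed

lemma taylor_coeff_index_mat_exp_Apoly:
  assumes u0: "u0 \<in> carrier_vec n" and j: "j < n"
  shows "taylor_coeff (\<lambda>eps. (mat_exp (Apoly n N A eps) *\<^sub>v u0) $ j) r
           = (\<Sum>k. coeff (pow_Apoly_vec_poly n N A u0 k j) r / fact k)"
proof -
  let ?c = "\<lambda>k. coeff (pow_Apoly_vec_poly n N A u0 k j)"
  have "(mat_exp (Apoly n N A eps) *\<^sub>v u0) $ j = (\<Sum>k. (\<Sum>r\<le>k*N. ?c k r * eps ^ r) / fact k)" for eps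
    using index_mat_exp_mult_vec[of _ n, OF _ u0 j] poly_pow_Apoly_vec_poly[OF u0 j]
    by (simp add: Apoly_def poly_eq_sum_coeff_le_degree_bound[OF degree_pow_Apoly_vec_poly])
  moreover have "k * N < r \<Longrightarrow> ?c k r = 0" for k r
    using degree_pow_Apoly_vec_poly[of n N A u0 k j] by (simp add: coeff_eq_0)
  ultimately show ?thesis
    using taylor_coeff_suminf_polys[of N ?c, OF _ norm_coeff_pow_Apoly_vec_poly_le[OF j]]
    by (simp add: sum_nonneg)
qed

lemma L_mat_carrier: "L_mat m n N A \<in> carrier_mat (m*n) (m*n)"
  by (simp add: L_mat_def)

lemma stack_vec_carrier: "stack_vec m n x \<in> carrier_vec (m*n)"
  by (simp add: stack_vec_def)

lemma L_mat_mult_coeff_vec: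
  "L_mat m n N A *\<^sub>v vec (m*n) (\<lambda>i. coeff (P (i mod n)) (i div n))
     = vec (m*n) (\<lambda>i. coeff (\<Sum>l<n. P l * Apoly_entry_poly N A (i mod n) l) (i div n))"
proof (rule eq_vecI)
  fix i assume "i < dim_vec (vec (m*n) (\<lambda>i. coeff (\<Sum>l<n. P l * Apoly_entry_poly N A (i mod n) l) (i div n)))"
  hence i: "i < m*n" by simp
  define r j where "r = i div n" and "j = i mod n"
  have r: "r < m" using i unfolding r_def by (simp add: less_mult_imp_div_less)
  let ?X = "vec (m*n) (\<lambda>i. coeff (P (i mod n)) (i div n))"
  have "(L_mat m n N A *\<^sub>v ?X) $ i = (\<Sum>i'<m*n. L_mat m n N A $$ (i,i') * ?X $ i')"
    using i by (simp add: scalar_prod_def L_mat_def atLeast0LessThan)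
  also have "\<dots> = (\<Sum>s<m. \<Sum>l<n.
      (if s \<le> r \<and> r - s \<le> min (m-1) N then A (r-s) $$ (j,l) else 0) * coeff (P l) s)"
    unfolding sum_lessThan_mult_blocks using i
    by (intro sum.cong refl) (auto simp: mult_add_less_mult L_mat_def r_def j_def Let_def)
  also have "\<dots> = (\<Sum>l<n. \<Sum>s\<le>r. coeff (P l) s * coeff (Apoly_entry_poly N A j l) (r-s))"
    by (subst sum.swap, rule sum.cong[OF refl], rule sum.mono_neutral_cong_right)
       (use r in \<open>auto simp: coeff_Apoly_entry_poly\<close>)
  also have "\<dots> = (vec (m*n) (\<lambda>i. coeff (\<Sum>l<n. P l * Apoly_entry_poly N A (i mod n) l) (i div n))) $ i"
    using i by (simp add: coeff_sum coeff_mult r_def j_def)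
  finally show "(L_mat m n N A *\<^sub>v ?X) $ i = \<dots>" .
qed (simp add: L_mat_def)

lemma L_mat_pow_mult_stack_vec:
  assumes u0: "u0 \<in> carrier_vec n"
  shows "L_mat m n N A ^\<^sub>m k *\<^sub>v stack_vec m n (\<lambda>l. if l = 0 then u0 else 0\<^sub>v n)
       = vec (m*n) (\<lambda>i. coeff (pow_Apoly_vec_poly n N A u0 k (i mod n)) (i div n))"
proof (induction k)
  case 0
  have "(if i div n = 0 then u0 else 0\<^sub>v n) $ (i mod n) = coeff [:u0 $ (i mod n):] (i div n)"
    if "i < m*n" for i
    using u0 mod_less_of_less_mult[OF that] by (cases "i div n") auto
  thus ?case by (auto simp: L_mat_def stack_vec_def)
next
  case (Suc k)
  show ?case
    unfolding pow_mat_Suc_mult_vec[OF L_mat_carrier stack_vec_carrier] Suc L_mat_mult_coeff_vec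
    by simp
qed

lemma index_mat_exp_L_mat_mult_stack_vec:
  assumes u0: "u0 \<in> carrier_vec n" and i: "i < m*n"
  shows "(mat_exp (L_mat m n N A) *\<^sub>v stack_vec m n (\<lambda>l. if l = 0 then u0 else 0\<^sub>v n)) $ i
       = (\<Sum>k. coeff (pow_Apoly_vec_poly n N A u0 k (i mod n)) (i div n) / fact k)"
  using i by (simp add: index_mat_exp_mult_vec[OF L_mat_carrier stack_vec_carrier i]
                        L_mat_pow_mult_stack_vec[OF u0])

lemma smult_Apoly:
  assumes "\<And>i. i \<le> N \<Longrightarrow> A i \<in> carrier_mat n n"
  shows "c \<cdot>\<^sub>m Apoly n N A eps = Apoly n N (\<lambda>i. c \<cdot>\<^sub>m A i) eps"
proof -
  have "(c \<cdot>\<^sub>m A k) $$ (a, b) = c * A k $$ (a, b)" if "k \<le> N" "a < n" "b < n" for k a b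
    using assms[OF that(1)] that(2,3) by simp
  thus ?thesis by (intro eq_matI) (auto simp: Apoly_def sum_distrib_left mult_ac)
qed

lemma smult_L_mat:
  assumes "\<And>i. i \<le> N \<Longrightarrow> A i \<in> carrier_mat n n"
  shows "c \<cdot>\<^sub>m L_mat m n N A = L_mat m n N (\<lambda>i. c \<cdot>\<^sub>m A i)"
proof (rule eq_matI)
  fix a b assume "a < dim_row (L_mat m n N (\<lambda>i. c \<cdot>\<^sub>m A i))" "b < dim_col (L_mat m n N (\<lambda>i. c \<cdot>\<^sub>m A i))"
  hence ab: "a < m*n" "b < m*n" by (simp_all add: L_mat_def)
  hence "a mod n < n" "b mod n < n" by (simp_all add: mod_less_of_less_mult)
  moreover have "(c \<cdot>\<^sub>m A k) $$ (a', b') = c * A k $$ (a', b')" if "k \<le> N" "a' < n" "b' < n" for k a' b'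
    using assms[OF that(1)] that(2,3) by simp
  ultimately show "(c \<cdot>\<^sub>m L_mat m n N A) $$ (a, b) = L_mat m n N (\<lambda>i. c \<cdot>\<^sub>m A i) $$ (a, b)"
    using ab by (auto simp: L_mat_def Let_def)
qed (simp_all add: L_mat_def)

theorem mainTheorem1:
  fixes n N m :: nat and A :: "nat \<Rightarrow> complex mat" and u0 :: "complex vec" and t :: real
  assumes "n \<ge> 1" and "N \<ge> 1"
    and "\<And>i. i \<le> N \<Longrightarrow> A i \<in> carrier_mat n n"
    and "u0 \<in> carrier_vec n"
    and "m \<ge> 1"
  shows "stack_vec m n (\<lambda>l. c_coeff n N A u0 l t)
         = mat_exp (complex_of_real t \<cdot>\<^sub>m L_mat m n N A)
             *\<^sub>v stack_vec m n (\<lambda>l. if l = 0 then u0 else 0\<^sub>v n)"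
proof (rule eq_vecI)
  define B where "B = (\<lambda>i. complex_of_real t \<cdot>\<^sub>m A i)"
  fix i assume "i < dim_vec (mat_exp (complex_of_real t \<cdot>\<^sub>m L_mat m n N A)
      *\<^sub>v stack_vec m n (\<lambda>l. if l = 0 then u0 else 0\<^sub>v n))"
  hence i: "i < m*n" by (simp add: mat_exp_def L_mat_def)
  hence j: "i mod n < n" by (rule mod_less_of_less_mult)
  have "u_sol n N A u0 t eps $ (i mod n) = (mat_exp (Apoly n N B eps) *\<^sub>v u0) $ (i mod n)" for eps
    by (simp add: u_sol_def B_def smult_Apoly[OF assms(3)])
  hence "stack_vec m n (\<lambda>l. c_coeff n N A u0 l t) $ i
      = taylor_coeff (\<lambda>eps. (mat_exp (Apoly n N B eps) *\<^sub>v u0) $ (i mod n)) (i div n)"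
    using i j by (simp add: stack_vec_def c_coeff_def)
  also have "\<dots> = (mat_exp (L_mat m n N B) *\<^sub>v stack_vec m n (\<lambda>l. if l = 0 then u0 else 0\<^sub>v n)) $ i"
    unfolding taylor_coeff_index_mat_exp_Apoly[OF assms(4) j]
      index_mat_exp_L_mat_mult_stack_vec[OF assms(4) i] ..
  finally show "stack_vec m n (\<lambda>l. c_coeff n N A u0 l t) $ i
      = (mat_exp (complex_of_real t \<cdot>\<^sub>m L_mat m n N A)
          *\<^sub>v stack_vec m n (\<lambda>l. if l = 0 then u0 else 0\<^sub>v n)) $ i"
    by (simp add: B_def smult_L_mat[OF assms(3)])
qed (simp add: stack_vec_def mat_exp_def L_mat_def)

end
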